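(* Let $G$ be a compact subgroup of $\operatorname{O}(3)$. Let $L_i$ ($i\ge1$) and $L$ be $n$-component links in $\mathbb{R}^3$, each given by a locally constant-speed parametrization $S^1\sqcup\cdots\sqcup S^1\to\mathbb{R}^3$ of the disjoint union of $n$ unit circles, and suppose $L_i\to L$ in the $C^1$ metric. If each $L_i$ is $G$-invariant, then $L$ is $G$-invariant; if each $L_i$ is oriented $G$-invariant, then $L$ is oriented $G$-invariant.
   Context: $G\subset\operatorname{O}(3)$ acts linearly on $\mathbb{R}^3$. A link $L$ is $G$-invariant if $g(\operatorname{Image}L)=\operatorname{Image}L$ for all $g\in G$. Equivalently (since isometries preserve speed), for each $g\in G$ there is $\hat g$ in the isometry group $\operatorname{O}(2)^n\rtimes S_n$ of $S^1\sqcup\cdots\sqcup S^1$ (acting by $(\gamma_1,\dots,\gamma_n,p)(\phi,i)=(\gamma_i(\phi),p(i))$) with $g\circ L=L\circ\hat g$. $L$ is oriented $G$-invariant if for every $g\in G$ such a $\hat g$ can be taken in $\operatorname{SO}(2)^n\rtimes S_n$, i.e. $g$ maps each component orientation-preservingly onto a component. *)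

theory Defs
  imports "HOL-Analysis.Analysis"
begin

text \<open>An n-component link is modelled as L :: nat => real => real^3, where L i phi is the
  point of the i-th circle (i < n) at angle phi; each component is 2pi-periodic.
  The disjoint union of n unit circles is {0..<n} x (R / 2pi Z).\<close>

definition link_image :: "nat \<Rightarrow> (nat \<Rightarrow> real \<Rightarrow> real^3) \<Rightarrow> (real^3) set" where
  "link_image n L = {L i \<phi> | i \<phi>. i < n}"

text \<open>A link given by a locally constant-speed C^1 parametrization: periodic, C^1,
  injective on the disjoint union of circles (an embedding, the domain being compact),
  and of constant speed on each component.\<close>
definition cs_link :: "nat \<Rightarrow> (nat \<Rightarrow> real \<Rightarrow> real^3) \<Rightarrow> bool" where
  "cs_link n L \<longleftrightarrow>
     (\<forall>i<n. \<forall>\<phi>. L i (\<phi> + 2 * pi) = L i \<phi>) \<and>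
     (\<forall>i<n. (\<forall>\<phi>. L i differentiable (at \<phi>)) \<and>
            continuous_on UNIV (\<lambda>\<phi>. vector_derivative (L i) (at \<phi>))) \<and>
     (\<forall>i<n. \<forall>j<n. \<forall>\<phi>\<in>{0..<2*pi}. \<forall>\<psi>\<in>{0..<2*pi}.
         L i \<phi> = L j \<psi> \<longrightarrow> i = j \<and> \<phi> = \<psi>) \<and>
     (\<forall>i<n. \<exists>c. \<forall>\<phi>. norm (vector_derivative (L i) (at \<phi>)) = c)"

definition C1_converges :: "nat \<Rightarrow> (nat \<Rightarrow> nat \<Rightarrow> real \<Rightarrow> real^3) \<Rightarrow> (nat \<Rightarrow> real \<Rightarrow> real^3) \<Rightarrow> bool" where
  "C1_converges n Ls L \<longleftrightarrow>
     (\<forall>\<epsilon>>0. \<forall>\<^sub>F k in sequentially. \<forall>i<n. \<forall>\<phi>.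
        norm (Ls k i \<phi> - L i \<phi>) +
        norm (vector_derivative (Ls k i) (at \<phi>) - vector_derivative (L i) (at \<phi>)) \<le> \<epsilon>)"

definition G_invariant :: "(real^3^3) set \<Rightarrow> nat \<Rightarrow> (nat \<Rightarrow> real \<Rightarrow> real^3) \<Rightarrow> bool" where
  "G_invariant G n L \<longleftrightarrow> (\<forall>g\<in>G. (\<lambda>x. g *v x) ` link_image n L = link_image n L)"

text \<open>Oriented invariance: each g acts via an element of SO(2)^n semidirect S_n, i.e.
  rotations phi |-> phi + a i and a permutation p of the components.\<close>
definition oriented_G_invariant :: "(real^3^3) set \<Rightarrow> nat \<Rightarrow> (nat \<Rightarrow> real \<Rightarrow> real^3) \<Rightarrow> bool" where
  "oriented_G_invariant G n L \<longleftrightarrow>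
     (\<forall>g\<in>G. \<exists>p a. p permutes {..<n} \<and>
        (\<forall>i<n. \<forall>\<phi>. g *v L i \<phi> = L (p i) (\<phi> + a i)))"

definition compact_subgroup_O3 :: "(real^3^3) set \<Rightarrow> bool" where
  "compact_subgroup_O3 G \<longleftrightarrow> compact G \<and> (\<forall>g\<in>G. orthogonal_matrix g) \<and> mat 1 \<in> G \<and>
     (\<forall>g\<in>G. \<forall>h\<in>G. g ** h \<in> G) \<and> (\<forall>g\<in>G. matrix_inv g \<in> G)"

end

theory Submission
  imports Defs
begin

text \<open>Fix g in G and a component i. For each k, g sends L_k i \<phi> to some point L_k j b of L_k
  (in the oriented case it sends the whole component, L_k i (\<phi> + t) to L_k j (b + t) for all t).
  Reducing b modulo 2pi, the pair (j, b) ranges over the compact set {..<n} \<times> [0, 2pi], so a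
  subsequence of it converges, and uniform convergence L_k \<rightarrow> L carries the relation to L.
  In the oriented case, injectivity of L turns the limiting map of components into a permutation.\<close>

definition C0_converges :: "nat \<Rightarrow> (nat \<Rightarrow> nat \<Rightarrow> real \<Rightarrow> real^3) \<Rightarrow> (nat \<Rightarrow> real \<Rightarrow> real^3) \<Rightarrow> bool" where
  "C0_converges n Ls L \<longleftrightarrow>
     (\<forall>\<epsilon>>0. \<forall>\<^sub>F k in sequentially. \<forall>i<n. \<forall>\<phi>. norm (Ls k i \<phi> - L i \<phi>) \<le> \<epsilon>)"

lemma C1_converges_imp_C0_converges:
  assumes "C1_converges n Ls L"
  shows "C0_converges n Ls L"
  unfolding C0_converges_def
proof (intro allI impI)
  fix \<epsilon> :: real assume "\<epsilon> > 0"
  then have "\<forall>\<^sub>F k in sequentially. \<forall>i<n. \<forall>\<phi>.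
        norm (Ls k i \<phi> - L i \<phi>) +
        norm (vector_derivative (Ls k i) (at \<phi>) - vector_derivative (L i) (at \<phi>)) \<le> \<epsilon>"
    using assms unfolding C1_converges_def by blast
  then show "\<forall>\<^sub>F k in sequentially. \<forall>i<n. \<forall>\<phi>. norm (Ls k i \<phi> - L i \<phi>) \<le> \<epsilon>"
    by (rule eventually_mono) (smt (verit) norm_ge_zero)
qed

lemma C0_converges_subseq:
  assumes "C0_converges n Ls L" "strict_mono r"
  shows "C0_converges n (Ls \<circ> r) L"
  using assms eventually_subseq unfolding C0_converges_def comp_def by blast

lemma C0_converges_tendsto:
  assumes conv: "C0_converges n Ls L"
    and cont: "continuous_on UNIV (L j)"
    and J: "J \<longlonglongrightarrow> j" and B: "B \<longlonglongrightarrow> b" and j: "j < n"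
  shows "(\<lambda>k. Ls k (J k) (B k)) \<longlonglongrightarrow> L j b"
proof -
  have J_eventually: "\<forall>\<^sub>F k in sequentially. J k = j"
    using topological_tendstoD[OF J, of "{j}"] by (simp add: open_discrete)
  have "(\<lambda>k. Ls k j (B k) - L j (B k)) \<longlonglongrightarrow> 0"
  proof (rule tendstoI)
    fix e :: real assume "e > 0"
    then have "\<forall>\<^sub>F k in sequentially. \<forall>i<n. \<forall>\<phi>. norm (Ls k i \<phi> - L i \<phi>) \<le> e/2"
      using conv unfolding C0_converges_def by (meson half_gt_zero)
    then show "\<forall>\<^sub>F k in sequentially. dist (Ls k j (B k) - L j (B k)) 0 < e"
    proof (rule eventually_mono)
      fix k assume "\<forall>i<n. \<forall>\<phi>. norm (Ls k i \<phi> - L i \<phi>) \<le> e/2"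
      then have "norm (Ls k j (B k) - L j (B k)) \<le> e/2" using j by blast
      then show "dist (Ls k j (B k) - L j (B k)) 0 < e" using \<open>e > 0\<close> by (simp add: dist_norm)
    qed
  qed
  moreover have "(\<lambda>k. L j (B k)) \<longlonglongrightarrow> L j b"
    using continuous_on_tendsto_compose[OF cont B] by simp
  ultimately have "(\<lambda>k. (Ls k j (B k) - L j (B k)) + L j (B k)) \<longlonglongrightarrow> 0 + L j b"
    by (rule tendsto_add)
  then have "(\<lambda>k. Ls k j (B k)) \<longlonglongrightarrow> L j b" by simp
  then show ?thesis
    by (rule Lim_transform_eventually) (use J_eventually in \<open>auto elim: eventually_mono\<close>)
qed

lemma periodic_2pi_shift_int:
  fixes f :: "real \<Rightarrow> 'b"
  assumes periodic: "\<forall>\<phi>. f (\<phi> + 2 * pi) = f \<phi>"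
  shows "f (x + 2 * pi * of_int m) = f x"
proof -
  have shift_nat: "f (y + 2 * pi * real k) = f y" for y k
  proof (induction k)
    case (Suc k)
    have "f (y + 2 * pi * real (Suc k)) = f ((y + 2 * pi * real k) + 2 * pi)"
      by (simp add: algebra_simps)
    then show ?case using periodic Suc by simp
  qed simp
  show ?thesis
  proof (cases "m \<ge> 0")
    case True
    then show ?thesis using shift_nat[of x "nat m"] by simp
  next
    case False
    then have "x = (x + 2 * pi * of_int m) + 2 * pi * real (nat (-m))" by simp
    then show ?thesis using shift_nat[of "x + 2 * pi * of_int m" "nat (-m)"] by metis
  qed
qed

lemma periodic_2pi_shift_reduce:
  fixes f :: "real \<Rightarrow> 'b"
  assumes periodic: "\<forall>\<phi>. f (\<phi> + 2 * pi) = f \<phi>"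
  obtains b where "b \<in> {0..<2*pi}" "\<And>\<phi>. f (\<phi> + a) = f (\<phi> + b)"
proof
  define m where "m = \<lfloor>a / (2*pi)\<rfloor>"
  have "of_int m \<le> a / (2*pi)" "a / (2*pi) < of_int m + 1"
    unfolding m_def by linarith+
  then have "2*pi * of_int m \<le> a" "a < 2*pi*(of_int m + 1)"
    by (simp_all add: field_simps)
  then show "a - 2 * pi * of_int m \<in> {0..<2*pi}" by (auto simp: algebra_simps)
  show "f (\<phi> + a) = f (\<phi> + (a - 2 * pi * of_int m))" for \<phi>
    using periodic_2pi_shift_int[OF periodic, of "\<phi> + a - 2 * pi * of_int m" m]
    by (simp add: algebra_simps)
qed

lemma periodic_2pi_value_reduce:
  fixes f :: "real \<Rightarrow> 'b"
  assumes "\<forall>\<phi>. f (\<phi> + 2 * pi) = f \<phi>"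
  obtains b where "b \<in> {0..<2*pi}" "f a = f b"
  using periodic_2pi_shift_reduce[OF assms, of a] by (metis add_0)

lemma cs_link_periodic: "cs_link n L \<Longrightarrow> i < n \<Longrightarrow> \<forall>\<phi>. L i (\<phi> + 2 * pi) = L i \<phi>"
  unfolding cs_link_def by blast

lemma cs_link_continuous: "cs_link n L \<Longrightarrow> i < n \<Longrightarrow> continuous_on UNIV (L i)"
  unfolding cs_link_def
  by (meson continuous_at_imp_continuous_on differentiable_imp_continuous_within)

lemma cs_link_same_component:
  assumes "cs_link n L" "i < n" "j < n" "L i \<phi> = L j \<psi>"
  shows "i = j"
proof -
  obtain \<phi>' where "\<phi>' \<in> {0..<2*pi}" "L i \<phi> = L i \<phi>'"
    using periodic_2pi_value_reduce[OF cs_link_periodic[OF assms(1,2)]] by blast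
  moreover obtain \<psi>' where "\<psi>' \<in> {0..<2*pi}" "L j \<psi> = L j \<psi>'"
    using periodic_2pi_value_reduce[OF cs_link_periodic[OF assms(1,3)]] by blast
  ultimately show ?thesis
    using assms unfolding cs_link_def by metis
qed

text \<open>The relation is required on a parameter set T: a single point for set-wise invariance,
  all of \<real> for oriented invariance.\<close>

lemma C0_limit_component_shift:
  assumes conv: "C0_converges n Ls L"
    and cont: "\<And>j. j < n \<Longrightarrow> continuous_on UNIV (L j)"
    and F: "continuous_on UNIV F"
    and i: "i < n"
    and shift: "\<And>k. \<exists>j<n. \<exists>b\<in>{0..2*pi}. \<forall>t\<in>T. F (Ls k i (t + c)) = Ls k j (t + b)"
  shows "\<exists>j<n. \<exists>b. \<forall>t\<in>T. F (L i (t + c)) = L j (t + b)"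
proof -
  obtain J B where JB: "\<And>k. (J k, B k) \<in> {..<n} \<times> {0..2*pi}"
    and JB_shift: "\<And>k t. t \<in> T \<Longrightarrow> F (Ls k i (t + c)) = Ls k (J k) (t + B k)"
    using shift by (simp add: Bex_def) metis
  have "compact ({..<n} \<times> {0..2*pi})"
    by (intro compact_Times finite_imp_compact compact_Icc) simp
  then obtain l r where l: "l \<in> {..<n} \<times> {0..2*pi}" and r: "strict_mono r"
    and lim: "((\<lambda>k. (J k, B k)) \<circ> r) \<longlonglongrightarrow> l"
    using compact_imp_seq_compact JB unfolding seq_compact_def by meson
  obtain j b where jb: "l = (j, b)" by (cases l)
  have j: "j < n" using l jb by auto
  have conv_r: "C0_converges n (Ls \<circ> r) L" using C0_converges_subseq[OF conv r] .
  have "F (L i (t + c)) = L j (t + b)" if t: "t \<in> T" for t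
  proof (rule LIMSEQ_unique)
    have "(\<lambda>k. Ls (r k) i (t + c)) \<longlonglongrightarrow> L i (t + c)"
      using C0_converges_tendsto[OF conv_r cont[OF i] tendsto_const tendsto_const i] by simp
    then show "(\<lambda>k. F (Ls (r k) i (t + c))) \<longlonglongrightarrow> F (L i (t + c))"
      using continuous_on_tendsto_compose[OF F] by simp
    have "(\<lambda>k. J (r k)) \<longlonglongrightarrow> j" "(\<lambda>k. t + B (r k)) \<longlonglongrightarrow> t + b"
      using tendsto_fst[OF lim] tendsto_snd[OF lim] jb by (auto simp: o_def intro: tendsto_add)
    from C0_converges_tendsto[OF conv_r cont[OF j] this j]
    show "(\<lambda>k. F (Ls (r k) i (t + c))) \<longlonglongrightarrow> L j (t + b)"
      using JB_shift[OF t] by simp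
  qed
  then show ?thesis using j by blast
qed

lemma orthogonal_matrix_inj: "orthogonal_matrix (g::real^'n^'n) \<Longrightarrow> inj (\<lambda>x. g *v x)"
  by (metis injI orthogonal_matrix_def matrix_vector_mul_assoc matrix_vector_mul_lid)

lemma matrix_mul_matrix_inv: "invertible (A::'a::comm_ring_1^'n^'n) \<Longrightarrow> A ** matrix_inv A = mat 1"
  unfolding invertible_def matrix_inv_def by (rule someI_ex[THEN conjunct1])

lemma orthogonal_matrix_mul_inv_vector:
  assumes "orthogonal_matrix (g::real^'n^'n)"
  shows "g *v (matrix_inv g *v y) = y"
proof -
  have "invertible g" using assms unfolding orthogonal_matrix_def invertible_def by blast
  then show ?thesis by (simp add: matrix_mul_matrix_inv matrix_vector_mul_assoc)
qed

lemma image_eq_if_inverse_closed: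
  assumes sub: "\<And>g. g \<in> G \<Longrightarrow> (\<lambda>x. g *v x) ` S \<subseteq> S"
    and G: "compact_subgroup_O3 G" and g: "g \<in> G"
  shows "(\<lambda>x. (g::real^3^3) *v x) ` S = S"
proof
  show "S \<subseteq> (\<lambda>x. g *v x) ` S"
  proof
    fix y assume "y \<in> S"
    then have "matrix_inv g *v y \<in> S" using sub G g unfolding compact_subgroup_O3_def by blast
    moreover have "y = g *v (matrix_inv g *v y)"
      using orthogonal_matrix_mul_inv_vector G g unfolding compact_subgroup_O3_def by metis
    ultimately show "y \<in> (\<lambda>x. g *v x) ` S" by blast
  qed
qed (rule sub[OF g])

lemma G_invariant_C0_limit:
  assumes G: "compact_subgroup_O3 G"
    and Ls: "\<And>k. cs_link n (Ls k)" and L: "cs_link n L"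
    and conv: "C0_converges n Ls L"
    and inv: "\<And>k. G_invariant G n (Ls k)"
  shows "G_invariant G n L"
proof -
  have "(\<lambda>x. g *v x) ` link_image n L \<subseteq> link_image n L" if g: "g \<in> G" for g
  proof
    fix y assume "y \<in> (\<lambda>x. g *v x) ` link_image n L"
    then obtain i \<phi> where i: "i < n" and y: "y = g *v L i \<phi>"
      unfolding link_image_def by blast
    have "\<exists>j<n. \<exists>b\<in>{0..2*pi}. \<forall>t\<in>{0}. g *v Ls k i (t + \<phi>) = Ls k j (t + b)" for k
    proof -
      have "g *v Ls k i \<phi> \<in> link_image n (Ls k)"
        using inv g i unfolding G_invariant_def link_image_def by blast
      then obtain j \<psi> where j: "j < n" and "g *v Ls k i \<phi> = Ls k j \<psi>"
        unfolding link_image_def by blast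
      moreover obtain b where "b \<in> {0..<2*pi}" "Ls k j \<psi> = Ls k j b"
        using periodic_2pi_value_reduce[OF cs_link_periodic[OF Ls j]] by blast
      ultimately show ?thesis by force
    qed
    from C0_limit_component_shift[OF conv cs_link_continuous[OF L]
        linear_continuous_on[OF matrix_vector_mul_bounded_linear] i this]
    show "y \<in> link_image n L" unfolding link_image_def y by auto
  qed
  then show ?thesis
    unfolding G_invariant_def using image_eq_if_inverse_closed[OF _ G] by blast
qed

lemma inj_on_component_map:
  assumes L: "cs_link n L" and g: "inj (\<lambda>x. (g::real^3^3) *v x)"
    and P: "\<And>i \<phi>. i < n \<Longrightarrow> g *v L i \<phi> = L (P i) (\<phi> + A i)"
  shows "inj_on P {..<n}"
proof (rule inj_onI)
  fix i i' assume i: "i \<in> {..<n}" and i': "i' \<in> {..<n}" and "P i = P i'"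
  then have "g *v L i 0 = g *v L i' (A i - A i')"
    using P[of i 0] P[of i' "A i - A i'"] by simp
  then have "L i 0 = L i' (A i - A i')" using injD[OF g] by blast
  then show "i = i'" using cs_link_same_component[OF L] i i' by blast
qed

lemma oriented_G_invariant_C0_limit:
  assumes G: "compact_subgroup_O3 G"
    and Ls: "\<And>k. cs_link n (Ls k)" and L: "cs_link n L"
    and conv: "C0_converges n Ls L"
    and inv: "\<And>k. oriented_G_invariant G n (Ls k)"
  shows "oriented_G_invariant G n L"
  unfolding oriented_G_invariant_def
proof
  fix g assume g: "g \<in> G"
  have "\<exists>j<n. \<exists>b. \<forall>\<phi>\<in>UNIV. g *v L i (\<phi> + 0) = L j (\<phi> + b)" if i: "i < n" for i
  proof (rule C0_limit_component_shift[OF conv cs_link_continuous[OF L]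
        linear_continuous_on[OF matrix_vector_mul_bounded_linear] i])
    fix k
    obtain p a where p: "p permutes {..<n}"
      and pa: "\<And>\<phi>. g *v Ls k i \<phi> = Ls k (p i) (\<phi> + a i)"
      using inv g i unfolding oriented_G_invariant_def by blast
    have "p i < n" using permutes_in_image[OF p] i by simp
    moreover obtain b where "b \<in> {0..<2*pi}" "\<And>\<phi>. Ls k (p i) (\<phi> + a i) = Ls k (p i) (\<phi> + b)"
      using periodic_2pi_shift_reduce[OF cs_link_periodic[OF Ls \<open>p i < n\<close>]] by blast
    ultimately show "\<exists>j<n. \<exists>b\<in>{0..2*pi}. \<forall>\<phi>\<in>UNIV. g *v Ls k i (\<phi> + 0) = Ls k j (\<phi> + b)"
      using pa by force
  qed
  then obtain P A where P: "\<And>i. i < n \<Longrightarrow> P i < n"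
    and PA: "\<And>i \<phi>. i < n \<Longrightarrow> g *v L i \<phi> = L (P i) (\<phi> + A i)"
    by simp metis
  define p where "p i = (if i < n then P i else i)" for i
  have "inj_on P {..<n}"
    using inj_on_component_map[OF L _ PA] orthogonal_matrix_inj G g
    unfolding compact_subgroup_O3_def by blast
  then have "p permutes {..<n}"
    by (intro inj_imp_permutes) (auto simp: p_def P inj_on_def)
  moreover have "\<forall>i<n. \<forall>\<phi>. g *v L i \<phi> = L (p i) (\<phi> + A i)"
    using PA unfolding p_def by simp
  ultimately show "\<exists>p a. p permutes {..<n} \<and> (\<forall>i<n. \<forall>\<phi>. g *v L i \<phi> = L (p i) (\<phi> + a i))"
    by blast
qed

theorem lemma3p3:
  fixes G :: "(real^3^3) set" and n :: nat
    and Ls :: "nat \<Rightarrow> nat \<Rightarrow> real \<Rightarrow> real^3" and L :: "nat \<Rightarrow> real \<Rightarrow> real^3"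
  assumes "compact_subgroup_O3 G"
    and "\<And>k. cs_link n (Ls k)"
    and "cs_link n L"
    and "C1_converges n Ls L"
  shows "((\<forall>k. G_invariant G n (Ls k)) \<longrightarrow> G_invariant G n L) \<and>
         ((\<forall>k. oriented_G_invariant G n (Ls k)) \<longrightarrow> oriented_G_invariant G n L)"
  using G_invariant_C0_limit[OF assms(1-3) C1_converges_imp_C0_converges[OF assms(4)]]
    oriented_G_invariant_C0_limit[OF assms(1-3) C1_converges_imp_C0_converges[OF assms(4)]]
  by blast

end
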